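(* Let $\Gamma=(V,E,\ell)$ be a connected finite labeled simplicial graph with all labels even whose Artin group is of FC-type, $\mathbb{K}$ a field of characteristic $0$, $\chi:A_\Gamma\to\mathbb{Z}$ a surjective non-resonant homomorphism, and $d\in\mathbb{T}_\Gamma$. The multiplicity spectral sequence $(E^k_{d,(p,q)},\partial^k)$ is bounded and satisfies: (i) $E^0_{d,(p,q)}=\{0\}$ if $p+q<-1$; (ii) $E^0_{d,(p,-p-1)}=\langle\sigma_\emptyset\rangle_{\mathbb{K}}$ if $p=0$, and $=\{0\}$ otherwise; (iii) for $q\ge0$: $E^0_{d,(p,q-p)}=\langle\sigma_X: X\text{ a simplex of }\mathcal{F}^f(\Gamma)\text{ with }q+1\text{ vertices},\ w(X)=p\rangle_{\mathbb{K}}$ if $p\le q+1$, and $E^0_{d,(p,q-p)}=\{0\}$ otherwise.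
   Context: $\Gamma$ has labels $\ell(e)=2\tilde\ell(e)$, $\tilde\ell(e)\ge1$; $A_\Gamma=\langle g_v\ (v\in V)\mid (g_vg_w)^{\tilde\ell(e)}=(g_wg_v)^{\tilde\ell(e)},\ e=\{v,w\}\in E\rangle$; FC-type means that for every clique $X$ the Coxeter group on $g_v$ ($v\in X$) with $g_v^2=1$, $(g_vg_w)^{\ell(\{v,w\})}=1$ is finite. $\mathcal{F}^f(\Gamma)$ is the simplicial complex on $V$ whose simplices are those cliques (plus the empty simplex $\emptyset$); $C^f_*(\Gamma)$ is its augmented chain complex over $\mathbb{K}$: $C^f_q$ has basis $\sigma_X$, $X$ a simplex with $q+1$ vertices ($C^f_{-1}=\mathbb{K}\sigma_\emptyset$), with the simplicial boundary $\partial$ for a fixed order of $V$. $m_v=\chi(g_v)$, $m_e=m_v+m_w$; non-resonant means $m_v\ne0$ for all $v$. $q_n(x)=(x^n-1)/(x-1)$; $\mathbf{p}_X=\prod_{v\in X}(t^{m_v}-1)$, $\mathbf{q}_X=\prod_{e\subseteq X,e\in E}q_{\tilde\ell(e)}(t^{m_e})$ (empty products $=1$). $\operatorname{mult}_d(f)$ is the multiplicity of the $d$-th cyclotomic polynomial $\Phi_d$ in $f$. $\mathbb{T}_\Gamma=\{d>1: d\mid m_v\text{ some }v\}\cup\{d>1: d\mid\tilde\ell(e)m_e,\ d\nmid m_e\text{ some }e\}$. Weight: $w(X)=\operatorname{mult}_d(\mathbf{p}_X\mathbf{q}_X)$. Filtration: $F_{d,p}C_q=\langle\sigma_X: X\text{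 with }q+1\text{ vertices},\ w(X)\le p\rangle\subseteq C^f_q(\Gamma)$, $F_{d,p}C_q=0$ for $p<0$; this is an increasing filtration by subcomplexes. The multiplicity spectral sequence is the spectral sequence of this filtered complex, with $E^0_{d,(p,q)}=F_{d,p}C_{p+q}/F_{d,p-1}C_{p+q}$ and differentials $\partial^k$ of bidegree $(-k,k-1)$. *)

theory Defs
  imports "HOL-Analysis.Analysis" "HOL-Computational_Algebra.Polynomial_FPS"
          "HOL-Computational_Algebra.Formal_Laurent_Series"
begin

text \<open>Vertices V, edges E (2-element subsets of V), reduced labels lt e = ltilde(e) >= 1;
  the actual label is 2 * lt e (all labels even).\<close>

definition labeled_graph :: "'v set \<Rightarrow> 'v set set \<Rightarrow> ('v set \<Rightarrow> nat) \<Rightarrow> bool" where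
  "labeled_graph V E lt \<longleftrightarrow> finite V \<and>
     (\<forall>e\<in>E. \<exists>v w. v \<noteq> w \<and> v \<in> V \<and> w \<in> V \<and> e = {v, w}) \<and>
     (\<forall>e\<in>E. lt e \<ge> 1)"

definition graph_connected :: "'v set \<Rightarrow> 'v set set \<Rightarrow> bool" where
  "graph_connected V E \<longleftrightarrow>
     (\<forall>v\<in>V. \<forall>w\<in>V. (\<lambda>x y. {x, y} \<in> E)\<^sup>*\<^sup>* v w)"

definition clique :: "'v set \<Rightarrow> 'v set set \<Rightarrow> 'v set \<Rightarrow> bool" where
  "clique V E X \<longleftrightarrow> X \<subseteq> V \<and> (\<forall>v\<in>X. \<forall>w\<in>X. v \<noteq> w \<longrightarrow> {v, w} \<in> E)"

text \<open>Generators g_v (v in X) with g_v^2 = 1 and (g_v g_w)^(2 lt {v,w}) = 1.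
  Since generators are involutions, the group is the monoid of words over X modulo
  the congruence generated by these relators.\<close>

inductive cox_eq :: "'v set \<Rightarrow> ('v set \<Rightarrow> nat) \<Rightarrow> 'v list \<Rightarrow> 'v list \<Rightarrow> bool"
  for X lt where
  refl: "set u \<subseteq> X \<Longrightarrow> cox_eq X lt u u"
| sym: "cox_eq X lt u w \<Longrightarrow> cox_eq X lt w u"
| trans: "cox_eq X lt u w \<Longrightarrow> cox_eq X lt w z \<Longrightarrow> cox_eq X lt u z"
| sq: "set u \<subseteq> X \<Longrightarrow> set w \<subseteq> X \<Longrightarrow> v \<in> X \<Longrightarrow>
       cox_eq X lt (u @ [v, v] @ w) (u @ w)"
| braid: "set u \<subseteq> X \<Longrightarrow> set w \<subseteq> X \<Longrightarrow> v \<in> X \<Longrightarrow> x \<in> X \<Longrightarrow> v \<noteq> x \<Longrightarrow>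
       cox_eq X lt (u @ concat (replicate (2 * lt {v, x}) [v, x]) @ w) (u @ w)"

definition coxeter_finite :: "('v set \<Rightarrow> nat) \<Rightarrow> 'v set \<Rightarrow> bool" where
  "coxeter_finite lt X \<longleftrightarrow> finite {c. \<exists>u. set u \<subseteq> X \<and> c = {w. cox_eq X lt u w}}"

definition FC_type :: "'v set \<Rightarrow> 'v set set \<Rightarrow> ('v set \<Rightarrow> nat) \<Rightarrow> bool" where
  "FC_type V E lt \<longleftrightarrow> (\<forall>X. clique V E X \<longrightarrow> coxeter_finite lt X)"

text \<open>Simplices of F^f(Gamma): cliques with finite Coxeter group (including the empty one).\<close>
definition simplices :: "'v set \<Rightarrow> 'v set set \<Rightarrow> ('v set \<Rightarrow> nat) \<Rightarrow> 'v set set" where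
  "simplices V E lt = {X. clique V E X \<and> coxeter_finite lt X}"

text \<open>Words in g_v^{+1} (v,True) and g_v^{-1} (v,False); the Artin group is the set of
  words modulo the congruence generated by free cancellation and the Artin relations.\<close>

inductive artin_eq :: "'v set \<Rightarrow> 'v set set \<Rightarrow> ('v set \<Rightarrow> nat) \<Rightarrow>
    ('v \<times> bool) list \<Rightarrow> ('v \<times> bool) list \<Rightarrow> bool"
  for V E lt where
  refl: "set u \<subseteq> V \<times> UNIV \<Longrightarrow> artin_eq V E lt u u"
| sym: "artin_eq V E lt u w \<Longrightarrow> artin_eq V E lt w u"
| trans: "artin_eq V E lt u w \<Longrightarrow> artin_eq V E lt w z \<Longrightarrow> artin_eq V E lt u z"
| cancel: "set u \<subseteq> V \<times> UNIV \<Longrightarrow> set w \<subseteq> V \<times> UNIV \<Longrightarrow> v \<in> V \<Longrightarrow>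
       artin_eq V E lt (u @ [(v, b), (v, \<not> b)] @ w) (u @ w)"
| braid: "set u \<subseteq> V \<times> UNIV \<Longrightarrow> set w \<subseteq> V \<times> UNIV \<Longrightarrow> {v, x} \<in> E \<Longrightarrow>
       artin_eq V E lt (u @ concat (replicate (lt {v, x}) [(v, True), (x, True)]) @ w)
                       (u @ concat (replicate (lt {v, x}) [(x, True), (v, True)]) @ w)"

text \<open>A homomorphism A_Gamma -> Z, given on words: additive and constant on classes.\<close>
definition artin_hom :: "'v set \<Rightarrow> 'v set set \<Rightarrow> ('v set \<Rightarrow> nat) \<Rightarrow>
    (('v \<times> bool) list \<Rightarrow> int) \<Rightarrow> bool" where
  "artin_hom V E lt chi \<longleftrightarrow>
     (\<forall>u\<in>lists (V \<times> UNIV). \<forall>w\<in>lists (V \<times> UNIV). chi (u @ w) = chi u + chi w) \<and>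
     (\<forall>u w. artin_eq V E lt u w \<longrightarrow> chi u = chi w)"

definition hom_surjective :: "'v set \<Rightarrow> (('v \<times> bool) list \<Rightarrow> int) \<Rightarrow> bool" where
  "hom_surjective V chi \<longleftrightarrow> (\<forall>z. \<exists>w\<in>lists (V \<times> UNIV). chi w = z)"

definition mv :: "(('v \<times> bool) list \<Rightarrow> int) \<Rightarrow> 'v \<Rightarrow> int" where
  "mv chi v = chi [(v, True)]"

definition me :: "(('v \<times> bool) list \<Rightarrow> int) \<Rightarrow> 'v set \<Rightarrow> int" where
  "me chi e = (\<Sum>v\<in>e. mv chi v)"

definition non_resonant :: "'v set \<Rightarrow> (('v \<times> bool) list \<Rightarrow> int) \<Rightarrow> bool" where
  "non_resonant V chi \<longleftrightarrow> (\<forall>v\<in>V. mv chi v \<noteq> 0)"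

definition T_Gamma :: "'v set \<Rightarrow> 'v set set \<Rightarrow> ('v set \<Rightarrow> nat) \<Rightarrow>
    (('v \<times> bool) list \<Rightarrow> int) \<Rightarrow> nat set" where
  "T_Gamma V E lt chi =
     {d. d > 1 \<and> (\<exists>v\<in>V. int d dvd mv chi v)} \<union>
     {d. d > 1 \<and> (\<exists>e\<in>E. int d dvd int (lt e) * me chi e \<and> \<not> int d dvd me chi e)}"

text \<open>t^m for m an integer, in the Laurent series ring (Laurent polynomials are those
  with finitely many nonzero coefficients).\<close>
definition tpow :: "int \<Rightarrow> complex fls" where
  "tpow m = (if m \<ge> 0 then fls_X ^ nat m else fls_X_inv ^ nat (- m))"

definition laurent_poly :: "complex fls \<Rightarrow> bool" where
  "laurent_poly g \<longleftrightarrow> finite {n. fls_nth g n \<noteq> 0}"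

text \<open>q_n(x) = (x^n - 1)/(x - 1) = 1 + x + ... + x^(n-1).\<close>
definition qpoly :: "nat \<Rightarrow> 'a::comm_semiring_1 \<Rightarrow> 'a" where
  "qpoly n x = (\<Sum>j<n. x ^ j)"

definition cyclotomic :: "nat \<Rightarrow> complex poly" where
  "cyclotomic d = (\<Prod>k\<in>{k. k < d \<and> coprime k d}.
       [:- cis (2 * pi * real k / real d), 1:])"

definition mult :: "nat \<Rightarrow> complex fls \<Rightarrow> nat" where
  "mult d f = (GREATEST k. \<exists>g. laurent_poly g \<and>
                   f = (fps_to_fls (fps_of_poly (cyclotomic d))) ^ k * g)"

definition pX :: "(('v \<times> bool) list \<Rightarrow> int) \<Rightarrow> 'v set \<Rightarrow> complex fls" where
  "pX chi X = (\<Prod>v\<in>X. tpow (mv chi v) - 1)"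

definition qX :: "'v set set \<Rightarrow> ('v set \<Rightarrow> nat) \<Rightarrow> (('v \<times> bool) list \<Rightarrow> int) \<Rightarrow>
    'v set \<Rightarrow> complex fls" where
  "qX E lt chi X = (\<Prod>e\<in>{e\<in>E. e \<subseteq> X}. qpoly (lt e) (tpow (me chi e)))"

definition weight :: "'v set set \<Rightarrow> ('v set \<Rightarrow> nat) \<Rightarrow> (('v \<times> bool) list \<Rightarrow> int) \<Rightarrow>
    nat \<Rightarrow> 'v set \<Rightarrow> nat" where
  "weight E lt chi d X = mult d (pX chi X * qX E lt chi X)"

text \<open>Chains are functions from simplices to K; sigma X is the basis chain of X.\<close>
definition sigma :: "'v set \<Rightarrow> 'v set \<Rightarrow> 'k::field" where
  "sigma X = (\<lambda>Y. if Y = X then 1 else 0)"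

definition kspan :: "('v set \<Rightarrow> 'k::field) set \<Rightarrow> ('v set \<Rightarrow> 'k) set" where
  "kspan B = {f. \<exists>A a. finite A \<and> A \<subseteq> B \<and> f = (\<lambda>Y. \<Sum>b\<in>A. a b * b Y)}"

definition Filt :: "'k::field itself \<Rightarrow> 'v set \<Rightarrow> 'v set set \<Rightarrow> ('v set \<Rightarrow> nat) \<Rightarrow>
    (('v \<times> bool) list \<Rightarrow> int) \<Rightarrow> nat \<Rightarrow> int \<Rightarrow> int \<Rightarrow> ('v set \<Rightarrow> 'k) set" where
  "Filt K V E lt chi d p n =
     (if p < 0 then {\<lambda>Y. 0} else
      kspan {sigma X | X. X \<in> simplices V E lt \<and> int (card X) = n + 1 \<and>
                          int (weight E lt chi d X) \<le> p})"

text \<open>The classes of the vectors in B form a basis of the quotient U / W.\<close>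
definition quotient_basis :: "('v set \<Rightarrow> 'k::field) set \<Rightarrow> ('v set \<Rightarrow> 'k) set \<Rightarrow>
    ('v set \<Rightarrow> 'k) set \<Rightarrow> bool" where
  "quotient_basis U W B \<longleftrightarrow> B \<subseteq> U \<and> W \<subseteq> U \<and>
     (\<forall>u\<in>U. \<exists>A a. finite A \<and> A \<subseteq> B \<and> (\<lambda>Y. u Y - (\<Sum>b\<in>A. a b * b Y)) \<in> W) \<and>
     (\<forall>A a. finite A \<and> A \<subseteq> B \<and> (\<lambda>Y. \<Sum>b\<in>A. a b * b Y) \<in> W \<longrightarrow> (\<forall>b\<in>A. a b = 0))"

text \<open>E^0_{d,(p,q)} = F_{d,p} C_{p+q} / F_{d,p-1} C_{p+q} has basis the classes of B.
  In particular "E^0 = {0}" is E0_basis ... {}.\<close>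
definition E0_basis :: "'k::field itself \<Rightarrow> 'v set \<Rightarrow> 'v set set \<Rightarrow> ('v set \<Rightarrow> nat) \<Rightarrow>
    (('v \<times> bool) list \<Rightarrow> int) \<Rightarrow> nat \<Rightarrow> int \<Rightarrow> int \<Rightarrow> ('v set \<Rightarrow> 'k) set \<Rightarrow> bool" where
  "E0_basis K V E lt chi d p q B \<longleftrightarrow>
     quotient_basis (Filt K V E lt chi d p (p + q)) (Filt K V E lt chi d (p - 1) (p + q)) B"

end

(* The filtration is spanned by basis chains, so E^0_{d,(p,q)} has as basis the chains sigma_X
   with |X| = p + q + 1 and w(X) = p, and everything else rests on the bound w(X) <= |X| for
   simplices X.  The multiplicity of Phi_d is at most the order of vanishing at the primitive
   root zeta = exp(2 pi i / d).  There t^{m_v} - 1 vanishes exactly when d | m_v, while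
   q_n(t^{m_e}) = (t^{n m_e} - 1) / (t^{m_e} - 1) with n = ltilde(e) vanishes at most simply,
   and only if d | n m_e but d does not divide m_e; then n >= 2 and some endpoint v of e has
   d not dividing m_v.  Two such edges of a simplex are disjoint, since three generators along
   a path with two labels >= 4 generate an infinite Coxeter group (an explicit action on Z
   shows this).  So these edges inject into the vertices not counted before, and w(X) <= |X|. *)

theory Submission
  imports Defs
begin

section \<open>Laurent polynomials and their orders of vanishing\<close>

unbundle fps_syntax

text \<open>\<open>lpoly P s\<close> is the Laurent polynomial \<open>t\<^sup>s P(t)\<close>.\<close>

definition lpoly :: "'a::comm_ring_1 poly \<Rightarrow> int \<Rightarrow> 'a fls" where
  "lpoly P s = fls_shift (- s) (fps_to_fls (fps_of_poly P))"

lemma lpoly_nth: "lpoly P s $$ k = (if s \<le> k then coeff P (nat (k - s)) else 0)"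
  by (simp add: lpoly_def)

lemma lpoly_mult: "lpoly P s * lpoly Q t = lpoly (P * Q) (s + t)"
  by (simp add: lpoly_def fls_times_both_shifted_simp fps_of_poly_mult fls_times_fps_to_fls
      add.commute)

lemma lpoly_1 [simp]: "lpoly 1 0 = 1"
  by (simp add: lpoly_def)

lemma lpoly_0 [simp]: "lpoly 0 s = 0"
  by (simp add: lpoly_def)

lemma lpoly_eq_0_iff [simp]: "lpoly P s = 0 \<longleftrightarrow> P = 0"
  by (simp add: lpoly_def fls_shift_eq0_iff fps_of_poly_eq_iff[of P 0, simplified])

lemma lpoly_power: "lpoly P s ^ j = lpoly (P ^ j) (int j * s)"
  by (induction j) (simp_all add: lpoly_mult algebra_simps)

lemma lpoly_diff: "lpoly P s - lpoly Q s = lpoly (P - Q) s"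
  by (simp add: lpoly_def fps_of_poly_diff)

lemma lpoly_sum: "(\<Sum>i\<in>I. lpoly (P i) s) = lpoly (\<Sum>i\<in>I. P i) s"
  by (induction I rule: infinite_finite_induct) (simp_all add: lpoly_def fps_of_poly_add)

lemma lpoly_inj: "lpoly P s = lpoly Q s \<Longrightarrow> P = Q"
proof (rule poly_eqI)
  fix n assume "lpoly P s = lpoly Q s"
  then have "lpoly P s $$ (s + int n) = lpoly Q s $$ (s + int n)" by simp
  then show "coeff P n = coeff Q n" by (simp add: lpoly_nth)
qed

lemma lpoly_monom_1: "lpoly (monom 1 k) (- int k) = 1"
  by (rule fls_eqI) (auto simp: lpoly_nth coeff_monom)

lemma lpoly_shift: "lpoly P s = lpoly (monom 1 k * P) (s - int k)"
  using lpoly_mult[of "monom 1 k" "- int k" P s] by (simp add: lpoly_monom_1)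

lemma order_eq_if_lpoly_eq:
  fixes P Q :: "'a::idom poly"
  assumes "lpoly P s = lpoly Q t" "z \<noteq> 0"
  shows "order z P = order z Q"
proof -
  have "order z P = order z Q" if "lpoly P s = lpoly Q t" "s \<le> t" for P Q :: "'a poly" and s t
  proof (cases "Q = 0")
    case False
    have "lpoly P s = lpoly (monom 1 (nat (t - s)) * Q) s"
      using that lpoly_shift[of Q t "nat (t - s)"] by simp
    then have "P = monom 1 (nat (t - s)) * Q" by (rule lpoly_inj)
    moreover have "order z (monom 1 (nat (t - s))) = 0"
      using \<open>z \<noteq> 0\<close> by (intro order_0I) (simp add: poly_monom)
    ultimately show ?thesis using False by (simp add: order_mult monom_eq_0_iff)
  qed (use that in simp)
  from this[of P s Q t] this[of Q t P s] assms show ?thesis by (cases "s \<le> t") auto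
qed

lemma laurent_poly_iff: "laurent_poly f \<longleftrightarrow> (\<exists>P s. f = lpoly P s)"
proof
  assume "laurent_poly f"
  then obtain b where "abs ` {n. f $$ n \<noteq> 0} \<subseteq> {..b}"
    unfolding laurent_poly_def finite_int_iff_bounded_le by blast
  then have b: "\<And>n. f $$ n \<noteq> 0 \<Longrightarrow> \<bar>n\<bar> \<le> b" by auto
  define P where "P = truncate_fps (nat (2 * b) + 1) (fls_regpart (fls_shift (- b) f))"
  have "f = lpoly P (- b)"
  proof (rule fls_eqI)
    fix n
    show "f $$ n = lpoly P (- b) $$ n"
      using b[of n] by (cases "f $$ n = 0") (auto simp: lpoly_nth P_def coeff_truncate_fps)
  qed
  then show "\<exists>P s. f = lpoly P s" by blast
next
  assume "\<exists>P s. f = lpoly P s"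
  then obtain P s where f: "f = lpoly P s" by blast
  have "{n. f $$ n \<noteq> 0} \<subseteq> {s .. s + int (degree P)}"
    by (auto simp: f lpoly_nth split: if_splits dest!: le_degree)
  then show "laurent_poly f" unfolding laurent_poly_def by (rule finite_subset) simp
qed

lemma laurent_poly_lpoly [simp]: "laurent_poly (lpoly P s)"
  by (auto simp: laurent_poly_iff)

lemma laurent_poly_0 [simp]: "laurent_poly 0"
  by (simp add: laurent_poly_def)

lemma laurent_poly_1 [simp]: "laurent_poly 1"
  using laurent_poly_lpoly[of 1 0] by simp

lemma laurent_poly_add: "laurent_poly f \<Longrightarrow> laurent_poly g \<Longrightarrow> laurent_poly (f + g)"
  unfolding laurent_poly_def
  by (rule finite_subset[of _ "{n. f $$ n \<noteq> 0} \<union> {n. g $$ n \<noteq> 0}"]) auto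

lemma laurent_poly_mult: "laurent_poly f \<Longrightarrow> laurent_poly g \<Longrightarrow> laurent_poly (f * g)"
  by (metis laurent_poly_iff lpoly_mult)

lemma laurent_poly_sum: "(\<And>i. i \<in> I \<Longrightarrow> laurent_poly (f i)) \<Longrightarrow> laurent_poly (\<Sum>i\<in>I. f i)"
  by (induction I rule: infinite_finite_induct) (simp_all add: laurent_poly_add)

lemma laurent_poly_prod: "(\<And>i. i \<in> I \<Longrightarrow> laurent_poly (f i)) \<Longrightarrow> laurent_poly (\<Prod>i\<in>I. f i)"
  by (induction I rule: infinite_finite_induct) (simp_all add: laurent_poly_mult)

text \<open>At \<open>z \<noteq> 0\<close> this does not depend on the representation \<open>t\<^sup>s P(t)\<close> chosen, since
  two representations differ by powers of \<open>t\<close>, which do not vanish at \<open>z\<close>.\<close>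

definition lorder :: "'a::idom \<Rightarrow> 'a fls \<Rightarrow> nat" where
  "lorder z f = order z (SOME P. \<exists>s. f = lpoly P s)"

lemma lorder_lpoly:
  fixes z :: "'a::idom"
  assumes "z \<noteq> 0"
  shows "lorder z (lpoly P s) = order z P"
proof -
  define Q where "Q = (SOME Q. \<exists>t. lpoly P s = lpoly Q t)"
  have "\<exists>t. lpoly P s = lpoly Q t"
    unfolding Q_def by (rule someI_ex) blast
  then have "order z P = order z Q"
    using order_eq_if_lpoly_eq assms by blast
  then show ?thesis by (simp add: lorder_def Q_def)
qed

lemma lorder_mult:
  assumes "laurent_poly f" "laurent_poly g" "f * g \<noteq> 0" "z \<noteq> 0"
  shows "lorder z (f * g) = lorder z f + lorder z g"
proof -
  obtain P s Q t where "f = lpoly P s" "g = lpoly Q t"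
    using assms(1,2) by (auto simp: laurent_poly_iff)
  with assms(3,4) show ?thesis by (simp add: lpoly_mult lorder_lpoly order_mult)
qed

lemma lorder_prod:
  assumes "finite I" "\<And>i. i \<in> I \<Longrightarrow> laurent_poly (f i) \<and> f i \<noteq> 0" "z \<noteq> 0"
  shows "lorder z (\<Prod>i\<in>I. f i) = (\<Sum>i\<in>I. lorder z (f i))"
  using assms
proof (induction I rule: finite_induct)
  case empty
  then show ?case using lorder_lpoly[of z 1 0] by simp
next
  case (insert i I)
  then show ?case by (simp add: lorder_mult laurent_poly_prod)
qed

lemma mult_le_lorder:
  assumes f: "laurent_poly f" "f \<noteq> 0" and z: "poly (cyclotomic d) z = 0" "z \<noteq> 0"
  shows "mult d f \<le> lorder z f"
proof -
  define Phi where "Phi = fps_to_fls (fps_of_poly (cyclotomic d))"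
  define divides where "divides = (\<lambda>k. \<exists>g. laurent_poly g \<and> f = Phi ^ k * g)"
  have bound: "k \<le> lorder z f" if "divides k" for k
  proof -
    obtain G u where f_eq: "f = Phi ^ k * lpoly G u"
      using \<open>divides k\<close> by (auto simp: divides_def laurent_poly_iff)
    have "Phi = lpoly (cyclotomic d) 0" by (simp add: Phi_def lpoly_def)
    then have f_eq': "f = lpoly (cyclotomic d ^ k * G) u"
      by (simp add: f_eq lpoly_power lpoly_mult)
    have "[:-z, 1:] ^ k dvd cyclotomic d ^ k * G"
      using z by (simp add: poly_eq_0_iff_dvd dvd_mult2 dvd_power_same)
    moreover have "cyclotomic d ^ k * G \<noteq> 0"
      using f f_eq' by simp
    ultimately have "k \<le> order z (cyclotomic d ^ k * G)"
      using order_divides by blast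
    then show ?thesis using z by (simp add: f_eq' lorder_lpoly)
  qed
  have "divides 0" using f by (auto simp: divides_def)
  then have "divides (Greatest divides)" using bound by (blast intro: GreatestI_nat)
  then show ?thesis using bound by (simp add: mult_def divides_def Phi_def)
qed

section \<open>Bounding the weight of a simplex by divisibility counts\<close>

lemma monom_1_neq_1: "n > 0 \<Longrightarrow> monom 1 n \<noteq> (1 :: 'a::comm_semiring_1 poly)"
  by (auto dest: arg_cong[where f = "\<lambda>p. coeff p 0"])

lemma order_monom_1_minus_1:
  fixes z :: "'a::field_char_0"
  assumes "n > 0" "z \<noteq> 0"
  shows "order z (monom 1 n - 1) = of_bool (z ^ n = 1)"
proof (cases "z ^ n = 1")
  case True
  have "poly (pderiv (monom 1 n - 1)) z \<noteq> 0"
    using assms by (simp add: pderiv_diff pderiv_monom poly_monom)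
  then have "order z (pderiv (monom 1 n - 1)) = 0" by (rule order_0I)
  then show ?thesis
    using order_pderiv[of "monom 1 n - 1" z] monom_1_neq_1[OF assms(1)] True
    by (simp add: poly_monom)
qed (simp add: order_0I poly_monom)

lemma tpow_eq_lpoly: "tpow m = lpoly 1 m"
  by (rule fls_eqI) (auto simp: tpow_def lpoly_nth fls_X_power_conv_shift_1
      fls_X_inv_power_conv_shift_1)

lemma tpow_minus_one_eq_lpoly:
  "tpow m - 1 = lpoly (smult (of_int (sgn m)) (monom 1 (nat \<bar>m\<bar>) - 1)) (min m 0)"
proof (cases m "0::int" rule: linorder_cases)
  case less
  have "tpow m - 1 = lpoly 1 m - lpoly (monom 1 (nat (- m)) * 1) (0 - int (nat (- m)))"
    by (simp only: tpow_eq_lpoly flip: lpoly_shift) simp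
  also have "\<dots> = lpoly (1 - monom 1 (nat (- m))) m"
    using less by (simp add: lpoly_diff)
  finally show ?thesis using less by simp
next
  case greater
  have "tpow m - 1 = lpoly (monom 1 (nat m) * 1) (m - int (nat m)) - lpoly 1 0"
    by (simp only: tpow_eq_lpoly flip: lpoly_shift) simp
  also have "\<dots> = lpoly (monom 1 (nat m) - 1) 0"
    using greater lpoly_diff[of "monom 1 (nat m)" 0 1] by simp
  finally show ?thesis using greater by simp
qed (simp add: tpow_eq_lpoly)

lemma tpow_minus_one_neq_0: "m \<noteq> 0 \<Longrightarrow> tpow m - 1 \<noteq> 0"
  by (simp add: tpow_minus_one_eq_lpoly monom_1_neq_1 sgn_0_0)

lemma laurent_poly_tpow_minus_one [simp]: "laurent_poly (tpow m - 1)"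
  by (simp add: tpow_minus_one_eq_lpoly)

lemma lorder_tpow_minus_one:
  assumes "m \<noteq> 0" "z \<noteq> 0"
  shows "lorder z (tpow m - 1) = of_bool (z ^ nat \<bar>m\<bar> = 1)"
  using assms
  by (simp add: tpow_minus_one_eq_lpoly lorder_lpoly order_smult sgn_0_0 order_monom_1_minus_1)

lemma qpoly_mult_minus_one: "qpoly l y * (y - 1) = y ^ l - (1::'a::comm_ring_1)"
  by (induction l) (simp_all add: qpoly_def algebra_simps)

lemma qpoly_tpow_eq_sum: "qpoly l (tpow m) = (\<Sum>j<l. lpoly 1 (int j * m))"
  by (simp add: qpoly_def tpow_eq_lpoly lpoly_power)

lemma laurent_poly_qpoly_tpow: "laurent_poly (qpoly l (tpow m))"
  by (simp add: qpoly_tpow_eq_sum laurent_poly_sum)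

lemma qpoly_tpow_0: "qpoly l (tpow 0) = lpoly (of_nat l) 0"
  using lpoly_sum[of "\<lambda>_. 1" 0 "{..<l}"] by (simp add: qpoly_tpow_eq_sum)

lemma qpoly_tpow_mult: "qpoly l (tpow m) * (tpow m - 1) = tpow (int l * m) - 1"
  by (simp add: qpoly_mult_minus_one tpow_eq_lpoly lpoly_power)

lemma qpoly_tpow_neq_0: "l \<ge> 1 \<Longrightarrow> qpoly l (tpow m) \<noteq> 0"
  using qpoly_tpow_mult[of l m] tpow_minus_one_neq_0[of "int l * m"]
  by (cases "m = 0") (auto simp: qpoly_tpow_0)

lemma lorder_qpoly_tpow_le:
  assumes "l \<ge> 1" "z \<noteq> 0"
  shows "lorder z (qpoly l (tpow m)) \<le> of_bool (z ^ nat \<bar>int l * m\<bar> = 1 \<and> z ^ nat \<bar>m\<bar> \<noteq> 1)"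
proof (cases "m = 0")
  case True
  have "order z (of_nat l) = 0"
    using assms(1) by (intro order_0I) (simp add: of_nat_poly)
  then show ?thesis using True assms by (simp add: qpoly_tpow_0 lorder_lpoly)
next
  case False
  then have lm: "int l * m \<noteq> 0" using assms(1) by simp
  have "lorder z (qpoly l (tpow m)) + lorder z (tpow m - 1) = lorder z (tpow (int l * m) - 1)"
    unfolding qpoly_tpow_mult[symmetric]
    by (rule lorder_mult[symmetric])
      (use qpoly_tpow_neq_0 tpow_minus_one_neq_0[OF False] assms laurent_poly_qpoly_tpow in auto)
  moreover have "z ^ nat \<bar>int l * m\<bar> = (z ^ nat \<bar>m\<bar>) ^ l"
    by (simp add: abs_mult nat_mult_distrib mult.commute[of l] power_mult)
  ultimately show ?thesis
    using lorder_tpow_minus_one[OF False assms(2)] lorder_tpow_minus_one[OF lm assms(2)] by auto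
qed

lemma cis_pow_eq_1_iff:
  assumes "d > 0"
  shows "cis (2 * pi / real d) ^ n = 1 \<longleftrightarrow> d dvd n"
proof
  assume "cis (2 * pi / real d) ^ n = 1"
  then have "cis (real n * (2 * pi / real d)) = 1" by (metis Complex.DeMoivre)
  then have "cos (real n * (2 * pi / real d)) = 1"
    by (metis cis.sel(1) one_complex.sel(1))
  then obtain k :: int where "real n * (2 * pi / real d) = real_of_int k * 2 * pi"
    using cos_one_2pi_int by blast
  then have "real n = real_of_int k * real d" using assms by (simp add: field_simps)
  then have "int n = k * int d" by (metis of_int_eq_iff of_int_mult of_int_of_nat_eq)
  then show "d dvd n" by (metis dvd_triv_right int_dvd_int_iff)
next
  assume "d dvd n"
  then obtain c where "n = d * c" by blast
  then have "real n * (2 * pi / real d) = 2 * pi * real c" using assms by (simp add: field_simps)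
  then show "cis (2 * pi / real d) ^ n = 1" by (simp add: Complex.DeMoivre)
qed

lemma cis_pow_nat_abs_eq_1_iff:
  "d > 0 \<Longrightarrow> cis (2 * pi / real d) ^ nat \<bar>m\<bar> = 1 \<longleftrightarrow> int d dvd m"
  by (simp add: cis_pow_eq_1_iff flip: int_dvd_int_iff)

lemma cyclotomic_root:
  assumes "d > 1"
  shows "poly (cyclotomic d) (cis (2 * pi / real d)) = 0"
proof -
  have "1 \<in> {k. k < d \<and> coprime k d}" using assms by simp
  then show ?thesis unfolding cyclotomic_def poly_prod
    by (intro prod_zero) (auto intro!: bexI[of _ 1])
qed

lemma lorder_pX_mult_qX:
  assumes "finite X" "\<forall>v\<in>X. mv chi v \<noteq> 0" "\<forall>e\<in>E. lt e \<ge> 1" "z \<noteq> 0"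
  shows "laurent_poly (pX chi X * qX E lt chi X)" "pX chi X * qX E lt chi X \<noteq> 0"
    and "lorder z (pX chi X * qX E lt chi X) = (\<Sum>v\<in>X. lorder z (tpow (mv chi v) - 1)) +
      (\<Sum>e\<in>{e\<in>E. e \<subseteq> X}. lorder z (qpoly (lt e) (tpow (me chi e))))"
proof -
  define S where "S = {e\<in>E. e \<subseteq> X}"
  have "finite S"
    using \<open>finite X\<close> by (auto simp: S_def intro: finite_subset[of _ "Pow X"])
  have p: "laurent_poly (tpow (mv chi v) - 1) \<and> tpow (mv chi v) - 1 \<noteq> 0" if "v \<in> X" for v
    using assms(2) that tpow_minus_one_neq_0[of "mv chi v"] by simp
  have q: "laurent_poly (qpoly (lt e) (tpow (me chi e))) \<and> qpoly (lt e) (tpow (me chi e)) \<noteq> 0"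
    if "e \<in> S" for e
    using assms(3) that by (simp add: S_def laurent_poly_qpoly_tpow qpoly_tpow_neq_0)
  have "laurent_poly (pX chi X) \<and> pX chi X \<noteq> 0" "laurent_poly (qX E lt chi X) \<and> qX E lt chi X \<noteq> 0"
    using p q \<open>finite X\<close> \<open>finite S\<close>
    by (auto simp: pX_def qX_def S_def[symmetric] intro: laurent_poly_prod)
  then show "laurent_poly (pX chi X * qX E lt chi X)" "pX chi X * qX E lt chi X \<noteq> 0"
    and "lorder z (pX chi X * qX E lt chi X) = (\<Sum>v\<in>X. lorder z (tpow (mv chi v) - 1)) +
      (\<Sum>e\<in>{e\<in>E. e \<subseteq> X}. lorder z (qpoly (lt e) (tpow (me chi e))))"
    using p q assms(4) \<open>finite X\<close> \<open>finite S\<close>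
    by (simp_all add: laurent_poly_mult lorder_mult lorder_prod pX_def qX_def S_def[symmetric])
qed

lemma weight_le_vertex_and_edge_count:
  assumes "finite X" "\<forall>v\<in>X. mv chi v \<noteq> 0" "\<forall>e\<in>E. lt e \<ge> 1" "d > 1"
  shows "weight E lt chi d X \<le> card {v\<in>X. int d dvd mv chi v} +
    card {e\<in>E. e \<subseteq> X \<and> int d dvd int (lt e) * me chi e \<and> \<not> int d dvd me chi e}"
proof -
  define z where "z = cis (2 * pi / real d)"
  have z: "z \<noteq> 0" "poly (cyclotomic d) z = 0"
    using cyclotomic_root[OF \<open>d > 1\<close>] by (auto simp: z_def)
  have z_pow: "z ^ nat \<bar>m\<bar> = 1 \<longleftrightarrow> int d dvd m" for m
    using cis_pow_nat_abs_eq_1_iff[of d m] \<open>d > 1\<close> by (simp add: z_def)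
  have q_le: "lorder z (qpoly (lt e) (tpow (me chi e))) \<le>
      of_bool (int d dvd int (lt e) * me chi e \<and> \<not> int d dvd me chi e)" if "e \<in> E" for e
    using lorder_qpoly_tpow_le[of "lt e" z "me chi e"] assms(3) that z by (simp add: z_pow)
  note lorder = lorder_pX_mult_qX[OF assms(1-3) z(1)]
  have "weight E lt chi d X \<le> lorder z (pX chi X * qX E lt chi X)"
    unfolding weight_def using lorder(1,2) z(2,1) by (rule mult_le_lorder)
  also have "\<dots> \<le> (\<Sum>v\<in>X. of_bool (int d dvd mv chi v)) +
      (\<Sum>e\<in>{e\<in>E. e \<subseteq> X}. of_bool (int d dvd int (lt e) * me chi e \<and> \<not> int d dvd me chi e))"
    unfolding lorder(3) using assms(2) z q_le
    by (intro add_mono sum_mono) (auto simp: lorder_tpow_minus_one z_pow)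
  also have "\<dots> = card {v\<in>X. int d dvd mv chi v} +
      card {e\<in>E. e \<subseteq> X \<and> int d dvd int (lt e) * me chi e \<and> \<not> int d dvd me chi e}"
    using \<open>finite X\<close> by (simp add: Int_def conj_assoc finite_subset[of _ "Pow X"])
  finally show ?thesis .
qed

section \<open>A path with two labels at least 4 generates an infinite Coxeter group\<close>

lemma funpow_translate:
  fixes c :: "'a::ab_group_add"
  assumes "\<And>x. f (c + x) = c + g x"
  shows "(f ^^ m) (c + x) = c + (g ^^ m) x"
  by (induction m) (simp_all add: assms)

lemma funpow_eq_on_invariant:
  assumes "\<And>x. x \<in> A \<Longrightarrow> f x = g x" "g ` A \<subseteq> A" "x \<in> A"
  shows "(f ^^ m) x = (g ^^ m) x \<and> (g ^^ m) x \<in> A"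
proof (induction m)
  case (Suc m)
  then show ?case using assms(1,2) by auto
qed (simp add: assms(3))

lemma funpow_mult_fixed: "(f ^^ n) x = x \<Longrightarrow> (f ^^ (n * k)) x = x"
  by (induction k) (simp_all add: funpow_add)

lemma funpow_involution_even:
  assumes "s \<circ> s = id"
  shows "s ^^ (2 * n) = id"
proof -
  have "s ^^ 2 = id" using assms by (simp add: numeral_2_eq_2)
  then show ?thesis by (metis funpow_mult id_funpow)
qed

lemma funpow_comp_commute:
  assumes "t \<circ> t = id" "(s \<circ> t) ^^ n = id"
  shows "(t \<circ> s) ^^ n = id"
proof
  fix x
  have "((t \<circ> s) ^^ n) (t y) = t (((s \<circ> t) ^^ n) y)" for y
    by (induction n arbitrary: y) (simp_all add: funpow_Suc_right del: funpow.simps(2))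
  from this[of "t x"] show "((t \<circ> s) ^^ n) x = id x"
    using assms by (simp add: pointfree_idE)
qed

definition word_action :: "('v \<Rightarrow> 'a \<Rightarrow> 'a) \<Rightarrow> 'v list \<Rightarrow> 'a \<Rightarrow> 'a" where
  "word_action \<sigma> w = foldr (\<circ>) (map \<sigma> w) id"

lemma word_action_Nil [simp]: "word_action \<sigma> [] = id"
  by (simp add: word_action_def)

lemma word_action_Cons [simp]: "word_action \<sigma> (v # w) = \<sigma> v \<circ> word_action \<sigma> w"
  by (simp add: word_action_def)

lemma word_action_append: "word_action \<sigma> (u @ w) = word_action \<sigma> u \<circ> word_action \<sigma> w"
  by (induction u) (simp_all add: o_assoc)

lemma word_action_alternating:
  "word_action \<sigma> (concat (replicate n [v, x])) = (\<sigma> v \<circ> \<sigma> x) ^^ n"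
  by (induction n) (simp_all add: word_action_append o_assoc)

lemma word_action_cox_eq:
  assumes "cox_eq X lt u w"
    and "\<And>v. v \<in> X \<Longrightarrow> \<sigma> v \<circ> \<sigma> v = id"
    and "\<And>v x. v \<in> X \<Longrightarrow> x \<in> X \<Longrightarrow> v \<noteq> x \<Longrightarrow> (\<sigma> v \<circ> \<sigma> x) ^^ (2 * lt {v, x}) = id"
  shows "word_action \<sigma> u = word_action \<sigma> w"
  using assms(1)
proof (induction rule: cox_eq.induct)
  case (sq u w v)
  then show ?case using assms(2)[of v] by (simp add: word_action_append o_assoc)
next
  case (braid u w v x)
  then show ?case by (simp add: word_action_append word_action_alternating assms(3))
qed simp_all

lemma not_coxeter_finite_if_infinite_orbit:
  assumes "\<And>v. v \<in> X \<Longrightarrow> \<sigma> v \<circ> \<sigma> v = id"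
    and "\<And>v x. v \<in> X \<Longrightarrow> x \<in> X \<Longrightarrow> v \<noteq> x \<Longrightarrow> (\<sigma> v \<circ> \<sigma> x) ^^ (2 * lt {v, x}) = id"
    and "infinite {word_action \<sigma> w y | w. set w \<subseteq> X}"
  shows "\<not> coxeter_finite lt X"
proof
  define classes where "classes = {c. \<exists>u. set u \<subseteq> X \<and> c = {w. cox_eq X lt u w}}"
  assume "coxeter_finite lt X"
  then have "finite classes" by (simp add: coxeter_finite_def classes_def)
  moreover have "{word_action \<sigma> w y | w. set w \<subseteq> X} \<subseteq>
      (\<lambda>c. word_action \<sigma> (SOME w. w \<in> c) y) ` classes"
  proof safe
    fix u assume u: "set u \<subseteq> X"
    define c where "c = {w. cox_eq X lt u w}"
    have "u \<in> c" using u by (simp add: c_def cox_eq.refl)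
    then have "cox_eq X lt u (SOME w. w \<in> c)"
      using someI[of "\<lambda>w. w \<in> c"] by (simp add: c_def)
    then have "word_action \<sigma> u = word_action \<sigma> (SOME w. w \<in> c)"
      using assms(1,2) by (rule word_action_cox_eq)
    moreover have "c \<in> classes" using u by (auto simp: classes_def c_def)
    ultimately show "word_action \<sigma> u y \<in> (\<lambda>c. word_action \<sigma> (SOME w. w \<in> c) y) ` classes"
      by (metis image_eqI)
  qed
  ultimately show False using assms(3) by (meson finite_imageI finite_subset)
qed

text \<open>On \<open>{0..<N}\<close>, \<open>N\<close> even, \<open>zigzag N\<close> moves the even points up and the odd points
  down; \<open>zigzag_index N\<close> lays these points out on a cycle on which \<open>zigzag N\<close> is the rotation
  by one step, so its \<open>N\<close>-th power is the identity.\<close>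

definition zigzag :: "int \<Rightarrow> int \<Rightarrow> int" where
  "zigzag N r =
    (if even r then if r + 2 < N then r + 2 else r + 1 else if 3 \<le> r then r - 2 else r - 1)"

definition zigzag_index :: "int \<Rightarrow> int \<Rightarrow> int" where
  "zigzag_index N r = (if even r then r div 2 else N - 1 - r div 2)"

lemma zigzag_in_range: "even N \<Longrightarrow> 0 \<le> r \<Longrightarrow> r < N \<Longrightarrow> 0 \<le> zigzag N r \<and> zigzag N r < N"
  unfolding zigzag_def by (cases "even r") (auto elim!: evenE oddE)

lemma zigzag_index_in_range:
  "even N \<Longrightarrow> 0 \<le> r \<Longrightarrow> r < N \<Longrightarrow> 0 \<le> zigzag_index N r \<and> zigzag_index N r < N"
  unfolding zigzag_index_def by (cases "even r") (auto elim!: evenE oddE)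

lemma zigzag_index_inj:
  "even N \<Longrightarrow> 0 \<le> r \<Longrightarrow> r < N \<Longrightarrow> 0 \<le> r' \<Longrightarrow> r' < N \<Longrightarrow>
    zigzag_index N r = zigzag_index N r' \<Longrightarrow> r = r'"
  unfolding zigzag_index_def by (cases "even r"; cases "even r'") (auto elim!: evenE oddE)

lemma zigzag_index_zigzag:
  "even N \<Longrightarrow> 0 \<le> r \<Longrightarrow> r < N \<Longrightarrow>
    zigzag_index N (zigzag N r) = (if zigzag_index N r = N - 1 then 0 else zigzag_index N r + 1)"
  unfolding zigzag_index_def zigzag_def by (cases "even r") (auto elim!: evenE oddE)

lemma zigzag_index_funpow:
  assumes "even N" "0 \<le> r" "r < N"
  shows "zigzag_index N ((zigzag N ^^ m) r) = (zigzag_index N r + int m) mod N \<and>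
    0 \<le> (zigzag N ^^ m) r \<and> (zigzag N ^^ m) r < N"
proof (induction m)
  case 0
  then show ?case using assms zigzag_index_in_range[OF assms] by simp
next
  case (Suc m)
  define x where "x = (zigzag N ^^ m) r"
  define y where "y = (zigzag_index N r + int m) mod N"
  have x: "zigzag_index N x = y" "0 \<le> x" "x < N" using Suc by (simp_all add: x_def y_def)
  have "0 \<le> y" "y < N" using assms by (auto simp: y_def)
  then have "(if y = N - 1 then 0 else y + 1) = (y + 1) mod N" by auto
  also have "\<dots> = (zigzag_index N r + int (Suc m)) mod N"
    unfolding y_def by (simp add: mod_add_left_eq add.assoc add.commute[of 1])
  finally show ?case
    using x zigzag_index_zigzag[OF assms(1) x(2,3)] zigzag_in_range[OF assms(1) x(2,3)]
    by (auto simp: x_def[symmetric] split: if_splits)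
qed

lemma zigzag_period:
  assumes "even N" "0 \<le> r" "r < N"
  shows "(zigzag N ^^ nat N) r = r"
proof (rule zigzag_index_inj[OF assms(1) _ _ assms(2,3)])
  show "0 \<le> (zigzag N ^^ nat N) r" "(zigzag N ^^ nat N) r < N"
    using zigzag_index_funpow[OF assms] by auto
  show "zigzag_index N ((zigzag N ^^ nat N) r) = zigzag_index N r"
    using zigzag_index_funpow[OF assms, of "nat N"] zigzag_index_in_range[OF assms] assms by simp
qed

text \<open>The action of \<open>u, v, w\<close> on \<open>\<int>\<close> witnessing infiniteness: \<open>v\<close> acts by \<open>swap_even\<close>,
  and the pairs \<open>{2k - 1, 2k}\<close> exchanged by \<open>swap_odd\<close> are dealt out periodically, \<open>I\<close>
  consecutive ones to \<open>u\<close> (\<open>swap_left\<close>) and the next \<open>J\<close> to \<open>w\<close> (\<open>swap_right\<close>). Then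
  \<open>uv\<close> is a zigzag of length \<open>2I + 2\<close> on each run of \<open>u\<close>-pairs and an involution
  elsewhere, \<open>u\<close> and \<open>w\<close> commute, and the orbit of \<open>0\<close> is infinite.\<close>

definition swap_even :: "int \<Rightarrow> int" where
  "swap_even n = (if even n then n + 1 else n - 1)"

definition swap_odd :: "int \<Rightarrow> int" where
  "swap_odd n = (if odd n then n + 1 else n - 1)"

definition odd_rep :: "int \<Rightarrow> int" where
  "odd_rep n = (if odd n then n else n - 1)"

definition left_pair :: "int \<Rightarrow> int \<Rightarrow> int \<Rightarrow> bool" where
  "left_pair I J n \<longleftrightarrow> odd_rep n mod (2 * I + 2 * J) < 2 * I"

definition swap_left :: "int \<Rightarrow> int \<Rightarrow> int \<Rightarrow> int" where
  "swap_left I J n = (if left_pair I J n then swap_odd n else n)"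

definition swap_right :: "int \<Rightarrow> int \<Rightarrow> int \<Rightarrow> int" where
  "swap_right I J n = (if left_pair I J n then n else swap_odd n)"

lemma swap_even_swap_even [simp]: "swap_even (swap_even n) = n"
  by (auto simp: swap_even_def)

lemma swap_odd_swap_odd [simp]: "swap_odd (swap_odd n) = n"
  by (auto simp: swap_odd_def)

lemma odd_rep_swap_odd [simp]: "odd_rep (swap_odd n) = odd_rep n"
  by (auto simp: odd_rep_def swap_odd_def)

lemma left_pair_swap_odd [simp]: "left_pair I J (swap_odd n) = left_pair I J n"
  by (simp add: left_pair_def)

lemma swap_even_involution: "swap_even \<circ> swap_even = id"
  by (auto simp: fun_eq_iff)

lemma swap_odd_involution: "swap_odd \<circ> swap_odd = id"
  by (auto simp: fun_eq_iff)

lemma swap_left_involution: "swap_left I J \<circ> swap_left I J = id"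
  by (auto simp: fun_eq_iff swap_left_def)

lemma swap_right_involution: "swap_right I J \<circ> swap_right I J = id"
  by (auto simp: fun_eq_iff swap_right_def)

lemma swap_left_swap_right: "swap_left I J \<circ> swap_right I J = swap_odd"
  by (auto simp: fun_eq_iff swap_left_def swap_right_def)

lemma swap_right_swap_left: "swap_right I J \<circ> swap_left I J = swap_odd"
  by (auto simp: fun_eq_iff swap_left_def swap_right_def)

lemma swap_even_add_even: "even c \<Longrightarrow> swap_even (c + x) = c + swap_even x"
  by (auto simp: swap_even_def)

lemma swap_odd_add_even: "even c \<Longrightarrow> swap_odd (c + x) = c + swap_odd x"
  by (auto simp: swap_odd_def)

lemma odd_rep_add_even: "even c \<Longrightarrow> odd_rep (c + x) = c + odd_rep x"
  by (auto simp: odd_rep_def)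

lemma swap_odd_diff_even: "even c \<Longrightarrow> swap_odd (x - c) = swap_odd x - c"
  by (auto simp: swap_odd_def)

lemma odd_rep_diff_even: "even c \<Longrightarrow> odd_rep (x - c) = odd_rep x - c"
  by (auto simp: odd_rep_def)

lemma swap_left_add_period:
  "swap_left I J ((2 * I + 2 * J) * k + x) = (2 * I + 2 * J) * k + swap_left I J x"
proof -
  have "even ((2 * I + 2 * J) * k)" by simp
  then show ?thesis
    by (simp add: swap_left_def left_pair_def odd_rep_add_even swap_odd_add_even)
qed

lemma swap_right_eq_swap_left:
  assumes "0 \<le> I" "0 \<le> J" "0 < I + J"
  shows "swap_right I J n = 2 * I + swap_left J I (n - 2 * I)"
proof -
  define e where "e = odd_rep n mod (2 * I + 2 * J)"
  have e: "0 \<le> e" "e < 2 * I + 2 * J" using assms(3) by (simp_all add: e_def)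
  have "(odd_rep n - 2 * I) mod (2 * J + 2 * I) = (e - 2 * I) mod (2 * I + 2 * J)"
    by (simp add: e_def mod_diff_left_eq add.commute)
  also have "\<dots> = (if 2 * I \<le> e then e - 2 * I else e + 2 * J)"
  proof (cases "2 * I \<le> e")
    case False
    have "e - 2 * I = (e + 2 * J) - (2 * I + 2 * J)" by simp
    then show ?thesis using False e assms(2) by (simp only: minus_mod_self2) simp
  qed (use e assms(1) in simp)
  finally have "left_pair J I (n - 2 * I) \<longleftrightarrow> \<not> left_pair I J n"
    using e by (simp add: left_pair_def e_def odd_rep_diff_even)
  then show ?thesis
    by (simp add: swap_right_def swap_left_def swap_odd_diff_even)
qed

lemma swap_left_on_period:
  assumes "1 \<le> J" "0 \<le> r" "r < 2 * I + 2 * J"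
  shows "swap_left I J r = (if 1 \<le> r \<and> r \<le> 2 * I then swap_odd r else r)"
proof (cases "r = 0")
  case True
  have "(-1) mod (2 * I + 2 * J) = 2 * I + 2 * J - 1"
    using assms by (simp add: zmod_minus1)
  then show ?thesis using True assms(1) by (simp add: swap_left_def left_pair_def odd_rep_def)
next
  case False
  then have "odd_rep r mod (2 * I + 2 * J) = odd_rep r"
    using assms(2,3) by (intro mod_pos_pos_trivial) (auto simp: odd_rep_def)
  moreover have "odd_rep r < 2 * I \<longleftrightarrow> r \<le> 2 * I"
    unfolding odd_rep_def by presburger
  ultimately show ?thesis using False assms(2) by (simp add: swap_left_def left_pair_def)
qed

lemma swap_left_swap_even_on_period:
  assumes "1 \<le> J" "0 \<le> r" "r < 2 * I + 2 * J"
  shows "swap_left I J (swap_even r) =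
    (if r < 2 * I + 2 then zigzag (2 * I + 2) r else swap_even r)"
proof (cases "even r")
  case True
  then obtain i where i: "r = 2 * i" by (auto elim: evenE)
  then have "2 * i + 1 < 2 * I + 2 * J" "2 * i + 1 \<le> 2 * I \<longleftrightarrow> i < I"
    using assms(3) i by presburger+
  then have "swap_left I J (swap_even r) = (if i < I then 2 * i + 2 else 2 * i + 1)"
    using swap_left_on_period[OF assms(1), of "2 * i + 1" I] assms i
    by (simp add: swap_even_def swap_odd_def)
  then show ?thesis using i by (auto simp: zigzag_def swap_even_def)
next
  case False
  then obtain i where i: "r = 2 * i + 1" by (auto elim: oddE)
  then have "swap_left I J (swap_even r) = (if 1 \<le> i \<and> i \<le> I then 2 * i - 1 else 2 * i)"
    using swap_left_on_period[OF assms(1), of "2 * i" I] assms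
    by (simp add: swap_even_def swap_odd_def)
  then show ?thesis using i assms(2) by (auto simp: zigzag_def swap_even_def)
qed

lemma swap_left_swap_even_period_on_period:
  assumes "0 \<le> I" "1 \<le> J" "0 \<le> r" "r < 2 * I + 2 * J"
  shows "((swap_left I J \<circ> swap_even) ^^ nat (2 * I + 2)) r = r"
proof -
  define f where "f = swap_left I J \<circ> swap_even"
  have f_eq: "f x = (if x < 2 * I + 2 then zigzag (2 * I + 2) x else swap_even x)"
    if "0 \<le> x" "x < 2 * I + 2 * J" for x
    using swap_left_swap_even_on_period[OF assms(2) that] by (simp add: f_def)
  show ?thesis
  proof (cases "r < 2 * I + 2")
    case True
    have "(f ^^ m) r = (zigzag (2 * I + 2) ^^ m) r" for m
    proof (rule conjunct1[OF funpow_eq_on_invariant[where A = "{0..<2 * I + 2}"]])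
      show "f x = zigzag (2 * I + 2) x" if "x \<in> {0..<2 * I + 2}" for x
        using that f_eq assms(2) by simp
      show "zigzag (2 * I + 2) ` {0..<2 * I + 2} \<subseteq> {0..<2 * I + 2}"
        using zigzag_in_range[of "2 * I + 2"] by auto
    qed (use True assms(3) in simp)
    then show ?thesis using zigzag_period[of "2 * I + 2" r] True assms(3) by (simp add: f_def)
  next
    case False
    then have beyond: "2 * I + 2 \<le> r" by simp
    have "2 * I + 2 \<le> swap_even r \<and> swap_even r < 2 * I + 2 * J"
    proof (cases "even r")
      case True
      then obtain i where "r = 2 * i" by (auto elim: evenE)
      then show ?thesis using beyond assms(4) unfolding swap_even_def by simp presburger
    next
      case False
      then obtain i where "r = 2 * i + 1" by (auto elim: oddE)
      then show ?thesis using beyond assms(4) unfolding swap_even_def by simp presburger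
    qed
    then have "(f ^^ 2) r = r"
      using beyond assms f_eq[of r] f_eq[of "swap_even r"] by (auto simp: numeral_2_eq_2)
    moreover have "nat (2 * I + 2) = 2 * nat (I + 1)" using assms(1) by simp
    ultimately show ?thesis by (metis funpow_mult_fixed f_def)
  qed
qed

lemma swap_left_swap_even_period:
  assumes "0 \<le> I" "1 \<le> J"
  shows "(swap_left I J \<circ> swap_even) ^^ nat (2 * I + 2) = id"
proof
  fix n
  define P where "P = 2 * I + 2 * J"
  define k where "k = n div P"
  define r where "r = n mod P"
  have "n = P * k + r" "0 \<le> r" "r < P" using assms by (simp_all add: k_def r_def P_def)
  have "(swap_left I J \<circ> swap_even) (P * k + x) = P * k + (swap_left I J \<circ> swap_even) x" for x
    by (simp add: P_def swap_even_add_even swap_left_add_period)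
  then have "((swap_left I J \<circ> swap_even) ^^ m) (P * k + r) =
      P * k + ((swap_left I J \<circ> swap_even) ^^ m) r" for m
    by (rule funpow_translate)
  then show "((swap_left I J \<circ> swap_even) ^^ nat (2 * I + 2)) n = id n"
    using swap_left_swap_even_period_on_period[OF assms, of r] \<open>n = P * k + r\<close> \<open>0 \<le> r\<close> \<open>r < P\<close>
    by (simp add: P_def)
qed

lemma swap_right_swap_even_period:
  assumes "1 \<le> I" "0 \<le> J"
  shows "(swap_right I J \<circ> swap_even) ^^ nat (2 * J + 2) = id"
proof
  fix n
  have "(swap_right I J \<circ> swap_even) (2 * I + x) = 2 * I + (swap_left J I \<circ> swap_even) x" for x
    using assms swap_right_eq_swap_left[of I J] by (simp add: swap_even_add_even)
  then have "((swap_right I J \<circ> swap_even) ^^ m) (2 * I + (n - 2 * I)) =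
      2 * I + ((swap_left J I \<circ> swap_even) ^^ m) (n - 2 * I)" for m
    by (rule funpow_translate)
  then show "((swap_right I J \<circ> swap_even) ^^ nat (2 * J + 2)) n = id n"
    using swap_left_swap_even_period[of J I] assms by simp
qed

definition path_action :: "'v \<Rightarrow> 'v \<Rightarrow> 'v \<Rightarrow> int \<Rightarrow> int \<Rightarrow> 'v \<Rightarrow> int \<Rightarrow> int" where
  "path_action u v w I J y =
    (if y = u then swap_left I J else if y = v then swap_even
     else if y = w then swap_right I J else id)"

lemma path_action_simps:
  assumes "u \<noteq> v" "v \<noteq> w" "u \<noteq> w"
  shows "path_action u v w I J u = swap_left I J" "path_action u v w I J v = swap_even"
    "path_action u v w I J w = swap_right I J" "y \<notin> {u, v, w} \<Longrightarrow> path_action u v w I J y = id"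
  using assms by (auto simp: path_action_def)

lemma path_action_involution: "path_action u v w I J y \<circ> path_action u v w I J y = id"
  by (simp add: path_action_def swap_left_involution swap_even_involution swap_right_involution)

lemma path_action_braid:
  assumes distinct: "u \<noteq> v" "v \<noteq> w" "u \<noteq> w" and IJ: "1 \<le> I" "1 \<le> J"
    and labels: "int (lt {u, v}) = I + 1" "int (lt {v, w}) = J + 1" and "a \<noteq> b"
  shows "(path_action u v w I J a \<circ> path_action u v w I J b) ^^ (2 * lt {a, b}) = id"
proof -
  let ?\<sigma> = "path_action u v w I J"
  note \<sigma> = path_action_simps[OF distinct, where I = I and J = J]
  have "nat (2 * I + 2) = 2 * lt {u, v}" "nat (2 * J + 2) = 2 * lt {v, w}"
    using IJ labels by (simp_all add: nat_eq_iff)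
  then have uv: "(swap_left I J \<circ> swap_even) ^^ (2 * lt {u, v}) = id"
    and vw: "(swap_right I J \<circ> swap_even) ^^ (2 * lt {v, w}) = id"
    using swap_left_swap_even_period[of I J] swap_right_swap_even_period[of I J] IJ by simp_all
  have uw: "(swap_left I J \<circ> swap_right I J) ^^ (2 * n) = id"
    "(swap_right I J \<circ> swap_left I J) ^^ (2 * n) = id" for n
    by (simp_all add: swap_left_swap_right swap_right_swap_left swap_odd_involution
        funpow_involution_even)
  show ?thesis
  proof (cases "a \<in> {u, v, w} \<and> b \<in> {u, v, w}")
    case True
    then show ?thesis
      using \<open>a \<noteq> b\<close> distinct \<sigma> uv vw uw funpow_comp_commute[OF swap_even_involution uv]
        funpow_comp_commute[OF swap_even_involution vw]
      by (auto simp: insert_commute)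
  next
    case False
    then have "?\<sigma> a \<circ> ?\<sigma> b = ?\<sigma> b \<or> ?\<sigma> a \<circ> ?\<sigma> b = ?\<sigma> a" using \<sigma>(4) by auto
    then show ?thesis using path_action_involution funpow_involution_even by metis
  qed
qed

lemma path_action_orbit:
  assumes "u \<noteq> v" "v \<noteq> w" "u \<noteq> w"
  shows "\<exists>ws. set ws \<subseteq> {u, v, w} \<and> word_action (path_action u v w I J) ws 0 = int k"
proof (induction k)
  case (Suc k)
  then obtain ws where ws: "set ws \<subseteq> {u, v, w}" "word_action (path_action u v w I J) ws 0 = int k"
    by blast
  consider "even (int k)" | "odd (int k)" "left_pair I J (int k)"
    | "odd (int k)" "\<not> left_pair I J (int k)"
    by blast
  then show ?case
  proof cases
    case 1
    then show ?thesis using ws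
      by (intro exI[of _ "v # ws"]) (simp add: path_action_simps[OF assms] swap_even_def)
  next
    case 2
    then show ?thesis using ws
      by (intro exI[of _ "u # ws"])
        (simp add: path_action_simps[OF assms] swap_left_def swap_odd_def)
  next
    case 3
    then show ?thesis using ws
      by (intro exI[of _ "w # ws"])
        (simp add: path_action_simps[OF assms] swap_right_def swap_odd_def)
  qed
qed (auto intro: exI[of _ "[]"])

lemma not_coxeter_finite_of_path:
  assumes X: "u \<in> X" "v \<in> X" "w \<in> X" and distinct: "u \<noteq> v" "v \<noteq> w" "u \<noteq> w"
    and labels: "lt {u, v} \<ge> 2" "lt {v, w} \<ge> 2"
  shows "\<not> coxeter_finite lt X"
proof -
  define I where "I = int (lt {u, v}) - 1"
  define J where "J = int (lt {v, w}) - 1"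
  have "range int \<subseteq> {word_action (path_action u v w I J) ws 0 | ws. set ws \<subseteq> X}"
  proof
    fix z :: int assume "z \<in> range int"
    then obtain ws where "set ws \<subseteq> {u, v, w}" "word_action (path_action u v w I J) ws 0 = z"
      using path_action_orbit[OF distinct] by blast
    then show "z \<in> {word_action (path_action u v w I J) ws 0 | ws. set ws \<subseteq> X}" using X by auto
  qed
  moreover have "infinite (range int :: int set)"
    by (metis finite_imageD infinite_UNIV_nat inj_of_nat)
  ultimately have "infinite {word_action (path_action u v w I J) ws 0 | ws. set ws \<subseteq> X}"
    using finite_subset by blast
  moreover have "(path_action u v w I J a \<circ> path_action u v w I J b) ^^ (2 * lt {a, b}) = id"
    if "a \<noteq> b" for a b
    by (rule path_action_braid[OF distinct]) (use labels that in \<open>simp_all add: I_def J_def\<close>)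
  ultimately show ?thesis
    using path_action_involution
    by (intro not_coxeter_finite_if_infinite_orbit[where \<sigma> = "path_action u v w I J" and y = 0])
qed

section \<open>The graded pieces of the multiplicity filtration\<close>

lemma sigma_eq_sigma_iff [simp]: "(sigma X :: 'v set \<Rightarrow> 'k::field) = sigma Y \<longleftrightarrow> X = Y"
  by (metis sigma_def one_neq_zero)

lemma sigma_apply: "sigma X Y = (if Y = X then 1 else 0)"
  by (simp add: sigma_def)

lemma sum_sigma_apply:
  assumes "finite A" "A \<subseteq> range sigma"
  shows "(\<Sum>b\<in>A. a b * b Y) = (if sigma Y \<in> A then a (sigma Y) else (0::'k::field))"
proof -
  have "a b * b Y = (if b = sigma Y then a b else 0)" if "b \<in> A" for b
    using that assms(2) by (auto simp: sigma_apply)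
  then have "(\<Sum>b\<in>A. a b * b Y) = (\<Sum>b\<in>A. if b = sigma Y then a b else 0)"
    by (rule sum.cong[OF HOL.refl])
  then show ?thesis using assms(1) by simp
qed

lemma kspan_mono: "A \<subseteq> B \<Longrightarrow> kspan A \<subseteq> kspan B"
  unfolding kspan_def by blast

lemma kspan_superset: "B \<subseteq> kspan B"
  unfolding kspan_def by (force intro!: exI[of _ "{_}"] exI[of _ "\<lambda>_. 1"])

lemma kspan_sigma_coeff_eq_0:
  assumes "finite A" "A \<subseteq> range sigma" "B \<subseteq> range sigma"
    and "(\<lambda>Y. \<Sum>b\<in>A. a b * b Y) \<in> kspan B" "sigma X \<in> A" "sigma X \<notin> B"
  shows "a (sigma X) = (0::'k::field)"
proof -
  obtain B' a' where B': "finite B'" "B' \<subseteq> B"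
    and eq: "(\<lambda>Y. \<Sum>b\<in>A. a b * b Y) = (\<lambda>Y. \<Sum>c\<in>B'. a' c * c Y)"
    using assms(4) unfolding kspan_def by blast
  have "sigma X \<notin> B'" "B' \<subseteq> range sigma" using B'(2) assms(3,6) by auto
  then show ?thesis
    using fun_cong[OF eq, of X] assms(1,2,5) B'(1) by (simp add: sum_sigma_apply)
qed

lemma quotient_basis_weight_slice:
  fixes P :: "'v set \<Rightarrow> bool" and w :: "'v set \<Rightarrow> nat"
  defines "G \<equiv> \<lambda>p. {sigma X | X. P X \<and> int (w X) \<le> p}"
  defines "F \<equiv> \<lambda>p. if p < 0 then {\<lambda>Y. 0 :: 'k::field} else kspan (G p)"
  shows "quotient_basis (F p) (F (p - 1)) {sigma X | X. P X \<and> int (w X) = p}"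
    (is "quotient_basis _ _ ?B")
proof (cases "p < 0")
  case True
  then show ?thesis by (auto simp: quotient_basis_def F_def)
next
  case False
  have G: "G p = ?B \<union> G (p - 1)" "?B \<inter> G (p - 1) = {}"
    by (auto simp: G_def)
  have F: "F p = kspan (G p)" "F (p - 1) = kspan (G (p - 1))"
    using False by (auto simp: F_def G_def kspan_def)
  have spanning: "\<exists>A a. finite A \<and> A \<subseteq> ?B \<and> (\<lambda>Y. u Y - (\<Sum>b\<in>A. a b * b Y)) \<in> kspan (G (p - 1))"
    if "u \<in> kspan (G p)" for u
  proof -
    obtain A a where A: "finite A" "A \<subseteq> G p" and u: "u = (\<lambda>Y. \<Sum>b\<in>A. a b * b Y)"
      using \<open>u \<in> kspan (G p)\<close> unfolding kspan_def by blast
    have "(\<lambda>Y. u Y - (\<Sum>b\<in>A \<inter> ?B. a b * b Y)) = (\<lambda>Y. \<Sum>b\<in>A - ?B. a b * b Y)"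
      using A(1) by (simp add: u sum.Int_Diff[of A _ ?B])
    moreover have "A - ?B \<subseteq> G (p - 1)" using A(2) G by blast
    ultimately show ?thesis
      using A(1) unfolding kspan_def by (intro exI[of _ "A \<inter> ?B"] exI[of _ a]) blast
  qed
  have independent: "a b = 0"
    if A: "finite A" "A \<subseteq> ?B" and comb: "(\<lambda>Y. \<Sum>b\<in>A. a b * b Y) \<in> kspan (G (p - 1))"
      and b: "b \<in> A" for A a b
  proof -
    obtain X where X: "b = sigma X" using A(2) b by blast
    have "G (p - 1) \<subseteq> range sigma" "A \<subseteq> range sigma" using A(2) by (auto simp: G_def)
    moreover have "b \<notin> G (p - 1)" using G(2) A(2) b by blast
    ultimately show ?thesis
      using kspan_sigma_coeff_eq_0[OF A(1) _ _ comb, of X] b unfolding X by blast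
  qed
  show ?thesis
    unfolding quotient_basis_def F
  proof (intro conjI)
    show "?B \<subseteq> kspan (G p)" using G(1) kspan_superset by blast
    show "kspan (G (p - 1)) \<subseteq> kspan (G p)" using G(1) by (intro kspan_mono) blast
  qed (use spanning independent in blast)+
qed

lemma E0_basis_weight_slice:
  "E0_basis K V E lt chi d p q {sigma X | X. X \<in> simplices V E lt \<and>
     int (card X) = p + q + 1 \<and> int (weight E lt chi d X) = p}"
  using quotient_basis_weight_slice[where P = "\<lambda>X. X \<in> simplices V E lt \<and> int (card X) = p + q + 1"
      and w = "weight E lt chi d" and p = p]
  by (simp only: E0_basis_def Filt_def conj_assoc)

section \<open>Weights of simplices\<close>

lemma labeled_graph_edgeE:
  assumes "labeled_graph V E lt" "e \<in> E"
  obtains a b where "a \<noteq> b" "e = {a, b}"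
  using assms unfolding labeled_graph_def by blast

lemma labeled_graph_edge_containingE:
  assumes "labeled_graph V E lt" "e \<in> E" "x \<in> e"
  obtains y where "y \<noteq> x" "e = {x, y}"
proof -
  obtain a b where ab: "a \<noteq> b" "e = {a, b}" using labeled_graph_edgeE assms(1,2) by blast
  then consider "x = a" | "x = b" using assms(3) by blast
  then show ?thesis
  proof cases
    case 1
    then show ?thesis using that[of b] ab by simp
  next
    case 2
    then show ?thesis using that[of a] ab by (simp add: insert_commute)
  qed
qed

lemma finite_simplex: "labeled_graph V E lt \<Longrightarrow> X \<in> simplices V E lt \<Longrightarrow> finite X"
  by (auto simp: labeled_graph_def simplices_def clique_def intro: finite_subset)

lemma finite_simplices: "labeled_graph V E lt \<Longrightarrow> finite (simplices V E lt)"
  by (rule finite_subset[of _ "Pow V"]) (auto simp: simplices_def clique_def labeled_graph_def)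

lemma empty_in_simplices: "{} \<in> simplices V E lt"
proof -
  have "{c. \<exists>u. set u \<subseteq> {} \<and> c = {w. cox_eq {} lt u w}} \<subseteq> {{w. cox_eq {} lt [] w}}"
    by auto
  then show ?thesis
    by (auto simp: simplices_def clique_def coxeter_finite_def intro: finite_subset)
qed

lemma simplex_heavy_edges_disjoint:
  assumes X: "X \<in> simplices V E lt" and lg: "labeled_graph V E lt"
    and e: "e1 \<in> E" "e2 \<in> E" "e1 \<subseteq> X" "e2 \<subseteq> X" "e1 \<noteq> e2"
    and heavy: "lt e1 \<ge> 2" "lt e2 \<ge> 2"
  shows "e1 \<inter> e2 = {}"
proof (rule ccontr)
  assume "e1 \<inter> e2 \<noteq> {}"
  then obtain x where "x \<in> e1" "x \<in> e2" by blast
  obtain y1 where y1: "y1 \<noteq> x" "e1 = {x, y1}"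
    using labeled_graph_edge_containingE[OF lg e(1) \<open>x \<in> e1\<close>] by blast
  obtain y2 where y2: "y2 \<noteq> x" "e2 = {x, y2}"
    using labeled_graph_edge_containingE[OF lg e(2) \<open>x \<in> e2\<close>] by blast
  have "\<not> coxeter_finite lt X"
  proof (rule not_coxeter_finite_of_path)
    show "y1 \<in> X" "x \<in> X" "y2 \<in> X" using e y1 y2 by auto
    show "y1 \<noteq> x" "x \<noteq> y2" "y1 \<noteq> y2" using y1 y2 e(5) by auto
    show "lt {y1, x} \<ge> 2" "lt {x, y2} \<ge> 2" using heavy y1 y2 by (simp_all add: insert_commute)
  qed
  then show False using X by (simp add: simplices_def)
qed

lemma card_divisible_edges_le:
  assumes X: "X \<in> simplices V E lt" and lg: "labeled_graph V E lt"
  shows "card {e\<in>E. e \<subseteq> X \<and> int d dvd int (lt e) * me chi e \<and> \<not> int d dvd me chi e} \<le>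
    card {v\<in>X. \<not> int d dvd mv chi v}"
proof -
  define C where "C = {e\<in>E. e \<subseteq> X \<and> int d dvd int (lt e) * me chi e \<and> \<not> int d dvd me chi e}"
  define N where "N = {v\<in>X. \<not> int d dvd mv chi v}"
  have endpoint: "\<exists>x. x \<in> e \<and> \<not> int d dvd mv chi x" if "e \<in> C" for e
  proof -
    have "e \<in> E" using that by (simp add: C_def)
    then obtain a b where ab: "a \<noteq> b" "e = {a, b}" by (rule labeled_graph_edgeE[OF lg])
    then have "\<not> int d dvd mv chi a + mv chi b" using that by (simp add: C_def me_def)
    then have "\<not> int d dvd mv chi a \<or> \<not> int d dvd mv chi b" by auto
    then show ?thesis using ab by blast
  qed
  have heavy: "lt e \<ge> 2" if "e \<in> C" for e
  proof -
    have "lt e \<noteq> 1" using that by (auto simp: C_def)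
    moreover have "lt e \<ge> 1" using lg that by (simp add: C_def labeled_graph_def)
    ultimately show ?thesis by simp
  qed
  define f where "f e = (SOME x. x \<in> e \<and> \<not> int d dvd mv chi x)" for e
  have f: "f e \<in> e \<and> \<not> int d dvd mv chi (f e)" if "e \<in> C" for e
    unfolding f_def using endpoint[OF that] by (rule someI_ex)
  have "inj_on f C"
  proof (rule inj_onI, rule ccontr)
    fix e1 e2 assume e: "e1 \<in> C" "e2 \<in> C" "f e1 = f e2" "e1 \<noteq> e2"
    then have "e1 \<in> E" "e2 \<in> E" "e1 \<subseteq> X" "e2 \<subseteq> X" by (simp_all add: C_def)
    then have "e1 \<inter> e2 = {}"
      by (rule simplex_heavy_edges_disjoint[OF X lg _ _ _ _ e(4) heavy[OF e(1)] heavy[OF e(2)]])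
    moreover have "f e1 \<in> e1 \<inter> e2" using f[OF e(1)] f[OF e(2)] e(3) by simp
    ultimately show False by simp
  qed
  moreover have "f ` C \<subseteq> N" using f by (auto simp: C_def N_def)
  ultimately have "card C \<le> card N"
    using finite_simplex[OF lg X] by (intro card_inj_on_le) (auto simp: N_def)
  then show ?thesis by (simp add: C_def N_def)
qed

lemma weight_le_card:
  assumes X: "X \<in> simplices V E lt" and lg: "labeled_graph V E lt"
    and nr: "non_resonant V chi" and d: "d > 1"
  shows "weight E lt chi d X \<le> card X"
proof -
  have "finite X" using finite_simplex[OF lg X] .
  have "weight E lt chi d X \<le> card {v\<in>X. int d dvd mv chi v} +
      card {e\<in>E. e \<subseteq> X \<and> int d dvd int (lt e) * me chi e \<and> \<not> int d dvd me chi e}"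
    using \<open>finite X\<close> X nr lg d
    by (intro weight_le_vertex_and_edge_count)
      (auto simp: non_resonant_def labeled_graph_def simplices_def clique_def)
  also have "\<dots> \<le> card {v\<in>X. int d dvd mv chi v} + card {v\<in>X. \<not> int d dvd mv chi v}"
    using card_divisible_edges_le[OF X lg] by simp
  also have "\<dots> = card X"
    using \<open>finite X\<close> by (subst card_Un_disjoint[symmetric]) (auto intro: arg_cong[where f = card])
  finally show ?thesis .
qed

lemma finite_nonvanishing_E0:
  fixes K :: "'k::field itself" and V :: "'v set"
  assumes "labeled_graph V E lt"
  shows "finite {(p, q). \<not> E0_basis K V E lt chi d p q {}}"
proof -
  define bidegree where
    "bidegree X = (int (weight E lt chi d X), int (card X) - 1 - int (weight E lt chi d X))" for X
  have "{(p, q). \<not> E0_basis K V E lt chi d p q {}} \<subseteq> bidegree ` simplices V E lt"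
  proof safe
    fix p q assume nonvanishing: "\<not> E0_basis K V E lt chi d p q {}"
    have "{sigma X :: 'v set \<Rightarrow> 'k | X. X \<in> simplices V E lt \<and> int (card X) = p + q + 1 \<and>
        int (weight E lt chi d X) = p} \<noteq> {}" (is "?B \<noteq> {}")
    proof
      assume empty: "?B = {}"
      show False
        using nonvanishing E0_basis_weight_slice[of K V E lt chi d p q] unfolding empty by blast
    qed
    then obtain X where
      "X \<in> simplices V E lt" "int (card X) = p + q + 1" "int (weight E lt chi d X) = p"
      by blast
    then show "(p, q) \<in> bidegree ` simplices V E lt"
      by (intro image_eqI[of _ _ X]) (auto simp: bidegree_def)
  qed
  then show ?thesis
    by (rule finite_subset) (use finite_simplices[OF assms] in simp)
qed

theorem proposition5p4:
  fixes K :: "'k::field_char_0 itself"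
    and V :: "'v set" and E :: "'v set set" and lt :: "'v set \<Rightarrow> nat"
    and chi :: "('v \<times> bool) list \<Rightarrow> int" and d :: nat
  assumes "labeled_graph V E lt"
    and "graph_connected V E"
    and "FC_type V E lt"
    and "artin_hom V E lt chi"
    and "hom_surjective V chi"
    and "non_resonant V chi"
    and "d \<in> T_Gamma V E lt chi"
  shows "finite {(p, q). \<not> E0_basis K V E lt chi d p q {}} \<and>
         (\<forall>p q. p + q < -1 \<longrightarrow> E0_basis K V E lt chi d p q {}) \<and>
         (\<forall>p. E0_basis K V E lt chi d p (- p - 1) (if p = 0 then {sigma {}} else {})) \<and>
         (\<forall>p q. q \<ge> 0 \<longrightarrow>
           E0_basis K V E lt chi d p (q - p)
             (if p \<le> q + 1
              then {sigma X | X. X \<in> simplices V E lt \<and> int (card X) = q + 1 \<and>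
                                 int (weight E lt chi d X) = p}
              else {}))"
proof -
  have "d > 1" using assms(7) by (auto simp: T_Gamma_def)
  then have weight_le: "weight E lt chi d X \<le> card X" if "X \<in> simplices V E lt" for X
    using weight_le_card that assms(1,6) by blast
  have E0: "E0_basis K V E lt chi d p q B" if "B = {sigma X | X. X \<in> simplices V E lt \<and>
      int (card X) = p + q + 1 \<and> int (weight E lt chi d X) = p}" for p q B
    using that E0_basis_weight_slice by blast
  have "E0_basis K V E lt chi d p q {}" if "p + q < -1" for p q
    using that by (intro E0) auto
  moreover have "E0_basis K V E lt chi d p (- p - 1) (if p = 0 then {sigma {}} else {})" for p
    using finite_simplex[OF assms(1)] weight_le[of "{}"] empty_in_simplices[of V E lt]
    by (intro E0) (auto simp: card_eq_0_iff)
  moreover have "E0_basis K V E lt chi d p (q - p)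
      (if p \<le> q + 1 then {sigma X | X. X \<in> simplices V E lt \<and> int (card X) = q + 1 \<and>
                                 int (weight E lt chi d X) = p} else {})" for p q
    using weight_le by (intro E0) force
  ultimately show ?thesis using finite_nonvanishing_E0[OF assms(1)] by blast
qed

end
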